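(* Let $v\ge2$ and $M,N\in{\cal I}_v$. Write $N=N_1+N_2$ with $N_1=\beta M$, $N_2\perp M$, and $M=M_1+M_2$ with $M_1=\alpha N$, $M_2\perp N$, where $\alpha,\beta\in\mathbb R$ and orthogonality is with respect to $(x,y)=\mathrm{Re}(xy^* )$. Then $\{e^M,e^N\}=0$ if and only if either ($|N_2|=\pi/2+\pi l$, $N_1=0$ and $|M|=\pi/2+\pi k$) or ($|M_2|=\pi/2+\pi k$, $M_1=0$ and $|N|=\pi/2+\pi l$) for some integers $l,k\ge0$.
   Context: ${\cal A}_v$ is the real Cayley-Dickson algebra of dimension $2^v$, $z^*$ its conjugation, $\mathrm{Re}(z)=(z+z^* )/2$, $|z|=(zz^* )^{1/2}$, ${\cal I}_v=\{z:\mathrm{Re}(z)=0\}$. For $M\in{\cal I}_v$, $e^M=\cos|M|+\frac{\sin|M|}{|M|}M$. $\{a,b\}:=ab+ba$. *)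

theory Defs
  imports Complex_Main
begin

text \<open>Real Cayley-Dickson algebra A_v of dimension 2^v. Elements are represented as
  coordinate functions nat => real supported on {0..<2^v}; coordinate 0 is the real part.
  Doubling rule: (a,b)(c,d) = (ac - d* b, da + b c*), (a,b)* = (a*, -b).\<close>

definition cd_elems :: "nat \<Rightarrow> (nat \<Rightarrow> real) set" where
  "cd_elems v = {x. \<forall>i\<ge>2^v. x i = 0}"

definition cd_imag :: "nat \<Rightarrow> (nat \<Rightarrow> real) set" where
  "cd_imag v = {x \<in> cd_elems v. x 0 = 0}"

definition cd_conj :: "nat \<Rightarrow> (nat \<Rightarrow> real) \<Rightarrow> nat \<Rightarrow> real" where
  "cd_conj v x = (\<lambda>i. if i = 0 then x 0 else if i < 2^v then - x i else 0)"

definition cd_lo :: "nat \<Rightarrow> (nat \<Rightarrow> real) \<Rightarrow> nat \<Rightarrow> real" where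
  "cd_lo n x = (\<lambda>i. if i < n then x i else 0)"

definition cd_hi :: "nat \<Rightarrow> (nat \<Rightarrow> real) \<Rightarrow> nat \<Rightarrow> real" where
  "cd_hi n x = (\<lambda>i. if i < n then x (i + n) else 0)"

definition cd_pair :: "nat \<Rightarrow> (nat \<Rightarrow> real) \<Rightarrow> (nat \<Rightarrow> real) \<Rightarrow> nat \<Rightarrow> real" where
  "cd_pair n a b = (\<lambda>i. if i < n then a i else if i < 2 * n then b (i - n) else 0)"

fun cd_mult :: "nat \<Rightarrow> (nat \<Rightarrow> real) \<Rightarrow> (nat \<Rightarrow> real) \<Rightarrow> nat \<Rightarrow> real" where
  "cd_mult 0 x y = (\<lambda>i. if i = 0 then x 0 * y 0 else 0)"
| "cd_mult (Suc v) x y =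
     (let n = 2^v; a = cd_lo n x; b = cd_hi n x; c = cd_lo n y; d = cd_hi n y;
          p = cd_mult v a c; q = cd_mult v (cd_conj v d) b;
          r = cd_mult v d a; s = cd_mult v b (cd_conj v c)
      in cd_pair n (\<lambda>i. p i - q i) (\<lambda>i. r i + s i))"

definition cd_norm :: "nat \<Rightarrow> (nat \<Rightarrow> real) \<Rightarrow> real" where
  "cd_norm v z = sqrt (cd_mult v z (cd_conj v z) 0)"

definition cd_inner :: "nat \<Rightarrow> (nat \<Rightarrow> real) \<Rightarrow> (nat \<Rightarrow> real) \<Rightarrow> real" where
  "cd_inner v x y = cd_mult v x (cd_conj v y) 0"

text \<open>e^M = cos|M| + (sin|M|/|M|) M  (for M = 0 this gives 1).\<close>
definition cd_exp :: "nat \<Rightarrow> (nat \<Rightarrow> real) \<Rightarrow> nat \<Rightarrow> real" where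
  "cd_exp v M = (\<lambda>i. (if i = 0 then cos (cd_norm v M) else 0)
                     + sin (cd_norm v M) / cd_norm v M * M i)"

definition cd_anticomm :: "nat \<Rightarrow> (nat \<Rightarrow> real) \<Rightarrow> (nat \<Rightarrow> real) \<Rightarrow> nat \<Rightarrow> real" where
  "cd_anticomm v a b = (\<lambda>i. cd_mult v a b i + cd_mult v b a i)"

end

theory Submission imports Defs begin

text \<open>For imaginary X and Y, polarising X X = -|X|^2 shows that XY + YX = -2 (X,Y) is real.
  Writing e^M = cos|M| + s M and e^N = cos|N| + t N, the anticommutator {e^M, e^N} therefore has
  real part 2 (cos|M| cos|N| - s t (M,N)) and imaginary part 2 (t cos|M| N + s cos|N| M).
  Pairing the imaginary part with M and with N and combining with the real part forces
  cos|M| = cos|N| = 0; then s, t \<noteq> 0 and the real part give (M,N) = 0. Since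
  (M,N) = \<beta> |M|^2 with |M| \<noteq> 0, this says exactly that N1 = 0, i.e. N = N2.\<close>

definition cd_one :: "nat \<Rightarrow> real" where
  "cd_one = (\<lambda>i. if i = 0 then 1 else 0)"

definition cd_dot :: "nat \<Rightarrow> (nat \<Rightarrow> real) \<Rightarrow> (nat \<Rightarrow> real) \<Rightarrow> real" where
  "cd_dot v x y = (\<Sum>i<2^v. x i * y i)"

lemma sum_lessThan_add:
  "(\<Sum>i<(n::nat) + m. f i) = (\<Sum>i<n. f i) + (\<Sum>i<m. f (i + n) :: 'a::comm_monoid_add)"
  by (induction m) (simp_all add: ac_simps)

lemma cd_dot_commute: "cd_dot v x y = cd_dot v y x"
  by (simp add: cd_dot_def mult.commute)

lemma cd_dot_lincomb_left:
  "cd_dot v (\<lambda>i. a * x i + b * y i) z = a * cd_dot v x z + b * cd_dot v y z"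
  by (simp add: cd_dot_def algebra_simps sum.distrib sum_distrib_left)

lemma cd_dot_self_nonneg: "cd_dot v x x \<ge> 0"
  by (simp add: cd_dot_def sum_nonneg)

lemma cd_dot_Suc:
  "cd_dot (Suc v) x y = cd_dot v (cd_lo (2^v) x) (cd_lo (2^v) y) + cd_dot v (cd_hi (2^v) x) (cd_hi (2^v) y)"
proof -
  have "(2::nat) ^ Suc v = 2^v + 2^v" by simp
  then show ?thesis
    by (simp only: cd_dot_def sum_lessThan_add) (simp add: cd_lo_def cd_hi_def)
qed

lemma cd_dot_conj_left: "cd_dot v (cd_conj v x) y = 2 * x 0 * y 0 - cd_dot v x y"
proof -
  have "cd_dot v (cd_conj v x) y = (\<Sum>i<2^v. (if i = 0 then 2 * x 0 * y 0 else 0) - x i * y i)"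
    unfolding cd_dot_def by (rule sum.cong) (auto simp: cd_conj_def)
  then show ?thesis
    by (simp add: sum_subtractf cd_dot_def)
qed

text \<open>Linearity in both factors is proved simultaneously, since the doubling formula
  moves each factor into both argument positions.\<close>
lemma cd_mult_lincomb:
  "cd_mult v (\<lambda>i. a * x i + b * y i) z = (\<lambda>i. a * cd_mult v x z i + b * cd_mult v y z i) \<and>
   cd_mult v z (\<lambda>i. a * x i + b * y i) = (\<lambda>i. a * cd_mult v z x i + b * cd_mult v z y i)"
proof (induction v arbitrary: a b x y z)
  case 0
  then show ?case by (auto simp: algebra_simps)
next
  case (Suc v)
  have lincomb: "cd_lo n (\<lambda>i. a * x i + b * y i) = (\<lambda>i. a * cd_lo n x i + b * cd_lo n y i)"
    "cd_hi n (\<lambda>i. a * x i + b * y i) = (\<lambda>i. a * cd_hi n x i + b * cd_hi n y i)"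
    "cd_conj v (\<lambda>i. a * x i + b * y i) = (\<lambda>i. a * cd_conj v x i + b * cd_conj v y i)"
    for n a b x y
    by (auto simp: cd_lo_def cd_hi_def cd_conj_def)
  show ?case
    by (simp add: Let_def lincomb Suc.IH, intro conjI ext)
       (auto simp: cd_pair_def algebra_simps)
qed

lemma cd_mult_add_left: "cd_mult v (\<lambda>i. x i + y i) z = (\<lambda>i. cd_mult v x z i + cd_mult v y z i)"
  and cd_mult_add_right: "cd_mult v z (\<lambda>i. x i + y i) = (\<lambda>i. cd_mult v z x i + cd_mult v z y i)"
  and cd_mult_minus_left: "cd_mult v (\<lambda>i. - x i) z = (\<lambda>i. - cd_mult v x z i)"
  and cd_mult_minus_right: "cd_mult v z (\<lambda>i. - x i) = (\<lambda>i. - cd_mult v z x i)"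
  and cd_mult_zero_left: "cd_mult v (\<lambda>i. 0) z = (\<lambda>i. 0)"
  and cd_mult_zero_right: "cd_mult v z (\<lambda>i. 0) = (\<lambda>i. 0)"
  using cd_mult_lincomb[of v 1 x 1 y z] cd_mult_lincomb[of v "-1" x 0 x z]
    cd_mult_lincomb[of v 0 z 0 z z] by simp_all

lemma cd_mult_real_part: "cd_mult v x y 0 = 2 * x 0 * y 0 - cd_dot v x y"
proof (induction v arbitrary: x y)
  case 0
  then show ?case by (simp add: cd_dot_def)
next
  case (Suc v)
  have "cd_mult (Suc v) x y 0 = cd_mult v (cd_lo (2^v) x) (cd_lo (2^v) y) 0
      - cd_mult v (cd_conj v (cd_hi (2^v) y)) (cd_hi (2^v) x) 0"
    by (simp add: Let_def cd_pair_def)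
  also have "\<dots> = 2 * x 0 * y 0 - cd_dot (Suc v) x y"
    unfolding Suc.IH cd_dot_conj_left cd_dot_Suc
    by (simp add: cd_lo_def cd_hi_def cd_conj_def cd_dot_commute)
  finally show ?case .
qed

lemma cd_inner_eq_dot: "cd_inner v x y = cd_dot v x y"
  unfolding cd_inner_def cd_mult_real_part cd_dot_commute[of v x] cd_dot_conj_left
  by (simp add: cd_conj_def cd_dot_commute)

lemma cd_mult_conj_self: "cd_mult v x (cd_conj v x) = (\<lambda>i. if i = 0 then cd_dot v x x else 0)"
proof (induction v arbitrary: x)
  case 0
  then show ?case by (auto simp: cd_dot_def cd_conj_def)
next
  case (Suc v)
  define a where "a = cd_lo (2^v) x"
  define b where "b = cd_hi (2^v) x"
  have conj_conj: "cd_conj v (cd_conj v y) = y" if "\<And>i. i \<ge> 2^v \<Longrightarrow> y i = 0" for y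
    using that by (auto simp: cd_conj_def)
  have a_conj_conj: "cd_conj v (cd_conj v a) = a" and b_conj_conj: "cd_conj v (cd_conj v b) = b"
    by (auto intro!: conj_conj simp: a_def b_def cd_lo_def cd_hi_def)
  have lo_conj: "cd_lo (2^v) (cd_conj (Suc v) x) = cd_conj v a"
    and hi_conj: "cd_hi (2^v) (cd_conj (Suc v) x) = (\<lambda>i. - b i)"
    and conj_minus: "cd_conj v (\<lambda>i. - b i) = (\<lambda>i. - cd_conj v b i)"
    by (auto simp: a_def b_def cd_lo_def cd_hi_def cd_conj_def)
  have conj_b_dot: "cd_dot v (cd_conj v b) (cd_conj v b) = cd_dot v b b"
    unfolding cd_dot_def by (rule sum.cong) (auto simp: cd_conj_def)
  have "cd_mult v (cd_conj v b) b = (\<lambda>i. if i = 0 then cd_dot v b b else 0)"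
    using Suc.IH[of "cd_conj v b"] unfolding b_conj_conj conj_b_dot .
  then have "cd_mult v (cd_conj v (\<lambda>i. - b i)) b = (\<lambda>i. if i = 0 then - cd_dot v b b else 0)"
    unfolding conj_minus cd_mult_minus_left by (auto simp: fun_eq_iff)
  then show ?case
    unfolding cd_mult.simps Let_def lo_conj hi_conj a_def[symmetric] b_def[symmetric]
      Suc.IH[of a] a_conj_conj cd_mult_minus_left cd_dot_Suc
    by (auto simp: cd_pair_def)
qed

lemma cd_norm_eq_sqrt_dot: "cd_norm v x = sqrt (cd_dot v x x)"
  by (simp add: cd_norm_def cd_mult_conj_self)

lemma cd_conj_imag: "x \<in> cd_imag v \<Longrightarrow> cd_conj v x = (\<lambda>i. - x i)"
  by (auto simp: cd_imag_def cd_elems_def cd_conj_def)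

lemma cd_mult_imag_self:
  assumes "x \<in> cd_imag v"
  shows "cd_mult v x x = (\<lambda>i. if i = 0 then - cd_dot v x x else 0)"
  using cd_mult_conj_self[of v x] unfolding cd_conj_imag[OF assms] cd_mult_minus_right
  by (auto simp: fun_eq_iff split: if_splits)

lemma cd_anticomm_imag:
  assumes x: "x \<in> cd_imag v" and y: "y \<in> cd_imag v"
  shows "cd_anticomm v x y = (\<lambda>i. if i = 0 then - 2 * cd_dot v x y else 0)"
proof (rule ext)
  fix i
  have "(\<lambda>i. x i + y i) \<in> cd_imag v"
    using x y by (auto simp: cd_imag_def cd_elems_def)
  moreover have "cd_dot v (\<lambda>i. x i + y i) (\<lambda>i. x i + y i) = cd_dot v x x + 2 * cd_dot v x y + cd_dot v y y"
    by (simp add: cd_dot_def algebra_simps sum.distrib sum_distrib_left)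
  ultimately have "cd_mult v (\<lambda>i. x i + y i) (\<lambda>i. x i + y i) i =
      (if i = 0 then - (cd_dot v x x + 2 * cd_dot v x y + cd_dot v y y) else 0)"
    using cd_mult_imag_self by presburger
  then show "cd_anticomm v x y i = (if i = 0 then - 2 * cd_dot v x y else 0)"
    unfolding cd_anticomm_def cd_mult_add_left cd_mult_add_right
      cd_mult_imag_self[OF x] cd_mult_imag_self[OF y]
    by (cases "i = 0") auto
qed

lemma cd_mult_one:
  "cd_mult v cd_one y = (\<lambda>i. if i < 2^v then y i else 0) \<and>
   cd_mult v y cd_one = (\<lambda>i. if i < 2^v then y i else 0)"
proof (induction v arbitrary: y)
  case 0
  then show ?case by (auto simp: cd_one_def)
next
  case (Suc v)
  have "cd_lo (2^v) cd_one = cd_one" and "cd_hi (2^v) cd_one = (\<lambda>i. 0)"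
    and "cd_conj v cd_one = cd_one" and "cd_conj v (\<lambda>i. 0) = (\<lambda>i. 0)"
    by (auto simp: cd_lo_def cd_hi_def cd_one_def cd_conj_def)
  then show ?case
    by (simp add: Let_def Suc.IH cd_mult_zero_left cd_mult_zero_right)
       (auto simp: cd_pair_def cd_lo_def cd_hi_def cd_conj_def fun_eq_iff)
qed

lemma cd_anticomm_scalar_plus_imag:
  assumes x: "x \<in> cd_imag v" and y: "y \<in> cd_imag v"
  shows "cd_anticomm v (\<lambda>i. c * cd_one i + s * x i) (\<lambda>i. d * cd_one i + t * y i) =
    (\<lambda>i. (2 * c * d - 2 * s * t * cd_dot v x y) * cd_one i + 2 * c * t * y i + 2 * d * s * x i)"
proof (rule ext)
  fix i
  have "s * (t * cd_mult v x y i) + s * (t * cd_mult v y x i) = s * t * (cd_mult v x y i + cd_mult v y x i)"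
    by (simp add: algebra_simps)
  also have "\<dots> = s * t * (if i = 0 then - 2 * cd_dot v x y else 0)"
    using cd_anticomm_imag[OF x y] by (simp add: cd_anticomm_def fun_eq_iff)
  finally have imag_part: "s * (t * cd_mult v x y i) + s * (t * cd_mult v y x i) =
      s * t * (if i = 0 then - 2 * cd_dot v x y else 0)" .
  have "(if i < 2^v then x i else 0) = x i" "(if i < 2^v then y i else 0) = y i"
    using x y by (simp_all add: cd_imag_def cd_elems_def)
  then show "cd_anticomm v (\<lambda>i. c * cd_one i + s * x i) (\<lambda>i. d * cd_one i + t * y i) i =
      (2 * c * d - 2 * s * t * cd_dot v x y) * cd_one i + 2 * c * t * y i + 2 * d * s * x i"
    unfolding cd_anticomm_def cd_mult_lincomb[THEN conjunct1] cd_mult_lincomb[THEN conjunct2]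
      cd_mult_one[THEN conjunct1] cd_mult_one[THEN conjunct2]
    using x y imag_part by (cases "i = 0") (simp_all add: cd_one_def algebra_simps)
qed

lemma cd_exp_eq:
  "cd_exp v M = (\<lambda>i. cos (cd_norm v M) * cd_one i + sin (cd_norm v M) / cd_norm v M * M i)"
  by (auto simp: cd_exp_def cd_one_def)

lemma cos_eq_0_iff_nonneg:
  assumes "0 \<le> x"
  shows "cos x = 0 \<longleftrightarrow> (\<exists>k::nat. x = pi/2 + pi * real k)"
proof
  assume "cos x = 0"
  then obtain n where "odd n" "x = real n * (pi/2)"
    using cos_zero_lemma[OF assms] by blast
  moreover from \<open>odd n\<close> obtain k where "n = 2 * k + 1"
    by (blast elim: oddE)
  ultimately show "\<exists>k::nat. x = pi/2 + pi * real k"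
    by (intro exI[of _ k]) (simp add: algebra_simps)
next
  assume "\<exists>k::nat. x = pi/2 + pi * real k"
  then obtain k :: nat where "x = pi/2 + pi * real k" ..
  moreover have "sin (pi * real k) = 0"
    using sin_npi[of k] by (simp add: mult.commute)
  ultimately show "cos x = 0"
    by (simp add: cos_add)
qed

lemma cd_norm_nonneg: "cd_norm v x \<ge> 0"
  by (simp add: cd_norm_eq_sqrt_dot cd_dot_self_nonneg)

lemma cd_norm_square: "cd_norm v x ^ 2 = cd_dot v x x"
  by (simp add: cd_norm_eq_sqrt_dot cd_dot_self_nonneg)

lemma cd_anticomm_exp_eq_0_iff:
  assumes M: "M \<in> cd_imag v" and N: "N \<in> cd_imag v"
  shows "cd_anticomm v (cd_exp v M) (cd_exp v N) = (\<lambda>i. 0) \<longleftrightarrow>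
    cos (cd_norm v M) = 0 \<and> cos (cd_norm v N) = 0 \<and> cd_dot v M N = 0"
proof -
  define a b where "a = cd_norm v M" and "b = cd_norm v N"
  define s t where "s = sin a / a" and "t = sin b / b"
  define p where "p = cd_dot v M N"
  have anticomm: "cd_anticomm v (cd_exp v M) (cd_exp v N) =
      (\<lambda>i. (2 * cos a * cos b - 2 * s * t * p) * cd_one i + 2 * cos a * t * N i + 2 * cos b * s * M i)"
    unfolding cd_exp_eq a_def b_def s_def t_def p_def
    by (rule cd_anticomm_scalar_plus_imag[OF M N])
  have "M 0 = 0" "N 0 = 0"
    using M N by (simp_all add: cd_imag_def)
  then have real_part: "cd_anticomm v (cd_exp v M) (cd_exp v N) 0 = 2 * (cos a * cos b - s * t * p)"
    by (simp add: anticomm cd_one_def)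
  have imag_part: "cd_anticomm v (cd_exp v M) (cd_exp v N) i = 2 * (cos a * t * N i + cos b * s * M i)"
    if "i \<noteq> 0" for i
    using that by (simp add: anticomm cd_one_def)
  have sin_a: "s * a = sin a" and sin_b: "t * b = sin b"
    by (simp_all add: s_def t_def)
  have cos_eq_0: "cos \<theta> = 0"
    if "cos \<phi> * cos \<theta> = \<sigma> * \<tau> * q" "cos \<phi> * \<tau> * q + cos \<theta> * \<sigma> * \<phi>\<^sup>2 = 0" "\<sigma> * \<phi> = sin \<phi>"
    for \<phi> \<theta> \<sigma> \<tau> q :: real
  proof -
    have "cos \<theta> = cos \<theta> * ((sin \<phi>)\<^sup>2 + (cos \<phi>)\<^sup>2)"
      by simp
    also have "\<dots> = cos \<phi> * (cos \<phi> * cos \<theta>) + cos \<theta> * (\<sigma> * \<phi>)\<^sup>2"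
      unfolding that(3) by algebra
    also have "\<dots> = \<sigma> * (cos \<phi> * \<tau> * q + cos \<theta> * \<sigma> * \<phi>\<^sup>2)"
      using that(1) by (simp add: algebra_simps power2_eq_square)
    finally show ?thesis
      using that(2) by simp
  qed
  show ?thesis
  proof
    assume vanish: "cd_anticomm v (cd_exp v M) (cd_exp v N) = (\<lambda>i. 0)"
    then have scalar: "cos a * cos b = s * t * p"
      using real_part by simp
    have vector: "cos a * t * N i + cos b * s * M i = 0" for i
      using vanish imag_part[of i] \<open>M 0 = 0\<close> \<open>N 0 = 0\<close> by (cases "i = 0") auto
    then have "cd_dot v (\<lambda>i. cos a * t * N i + cos b * s * M i) M = 0"
      and "cd_dot v (\<lambda>i. cos b * s * M i + cos a * t * N i) N = 0"
      unfolding cd_dot_def by (simp_all add: add.commute)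
    then have "cos a * t * p + cos b * s * a\<^sup>2 = 0" and "cos b * s * p + cos a * t * b\<^sup>2 = 0"
      unfolding cd_dot_lincomb_left a_def b_def cd_norm_square p_def
      by (simp_all add: cd_dot_commute)
    then have cos_a: "cos a = 0" and cos_b: "cos b = 0"
      using cos_eq_0[OF scalar] cos_eq_0[of b a t s p] scalar sin_a sin_b
      by (simp_all add: mult.commute)
    then have "sin a \<noteq> 0" "sin b \<noteq> 0"
      using sin_cos_squared_add[of a] sin_cos_squared_add[of b] by auto
    then have "s \<noteq> 0" "t \<noteq> 0"
      by (auto simp: s_def t_def)
    then have "p = 0"
      using scalar cos_a by simp
    with cos_a cos_b show "cos (cd_norm v M) = 0 \<and> cos (cd_norm v N) = 0 \<and> cd_dot v M N = 0"
      by (simp add: a_def b_def p_def)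
  next
    assume "cos (cd_norm v M) = 0 \<and> cos (cd_norm v N) = 0 \<and> cd_dot v M N = 0"
    then show "cd_anticomm v (cd_exp v M) (cd_exp v N) = (\<lambda>i. 0)"
      by (simp add: anticomm a_def b_def p_def)
  qed
qed

theorem corollary13:
  fixes v :: nat and M N M1 M2 N1 N2 :: "nat \<Rightarrow> real" and \<alpha> \<beta> :: real
  assumes "v \<ge> 2"
    and "M \<in> cd_imag v" and "N \<in> cd_imag v"
    and "N = (\<lambda>i. N1 i + N2 i)" and "N1 = (\<lambda>i. \<beta> * M i)" and "cd_inner v N2 M = 0"
    and "M = (\<lambda>i. M1 i + M2 i)" and "M1 = (\<lambda>i. \<alpha> * N i)" and "cd_inner v M2 N = 0"
  shows "cd_anticomm v (cd_exp v M) (cd_exp v N) = (\<lambda>i. 0) \<longleftrightarrow>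
    (\<exists>(l::nat) (k::nat).
       (cd_norm v N2 = pi/2 + pi * real l \<and> N1 = (\<lambda>i. 0) \<and> cd_norm v M = pi/2 + pi * real k) \<or>
       (cd_norm v M2 = pi/2 + pi * real k \<and> M1 = (\<lambda>i. 0) \<and> cd_norm v N = pi/2 + pi * real l))"
proof -
  have "N2 = (\<lambda>i. N i - \<beta> * M i)"
    using assms(4,5) by auto
  then have dot_NM: "cd_dot v N M = \<beta> * cd_dot v M M"
    using assms(6) by (simp add: cd_inner_eq_dot cd_dot_def sum_subtractf sum_distrib_left algebra_simps)
  have N1_eq_0: "N1 = (\<lambda>i. 0)" if "cos (cd_norm v M) = 0" "cd_dot v M N = 0"
  proof -
    have "cd_dot v M M \<noteq> 0"
      using that(1) by (auto simp: cd_norm_eq_sqrt_dot)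
    then show ?thesis
      using that(2) dot_NM assms(5) by (simp add: cd_dot_commute)
  qed
  have N2_eq_N: "N2 = N" if "N1 = (\<lambda>i. 0)"
    using that assms(4) by simp
  have M2_eq_M: "M2 = M" if "M1 = (\<lambda>i. 0)"
    using that assms(7) by simp
  have orth_if_N2_eq_N: "cd_dot v M N = 0" if "N2 = N"
    using that assms(6) by (simp add: cd_inner_eq_dot cd_dot_commute)
  have orth_if_M2_eq_M: "cd_dot v M N = 0" if "M2 = M"
    using that assms(9) by (simp add: cd_inner_eq_dot)
  show ?thesis
    unfolding cd_anticomm_exp_eq_0_iff[OF assms(2,3)]
    using N1_eq_0 N2_eq_N M2_eq_M orth_if_N2_eq_N orth_if_M2_eq_M
      cos_eq_0_iff_nonneg[OF cd_norm_nonneg]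
    by auto
qed

end
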